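(* Let $A$ be a commutative nilpotent $\mathbb{F}_p$-algebra of finite dimension $n$, and let $e\ge1$ be such that $A^e\ne 0$ and $A^{e+1}=0$. For $k\ge 0$ let $N_k=\{a\in A: x_1\cdots x_k a=0 \text{ for all } x_1,\dots,x_k\in A\}$ (so $N_0=0$ and $N_e=A$). For $x\in A$ let $q(x)=\dim_{\mathbb{F}_p}(\mathbb{F}_p x+Ax)$, and for $1\le t\le e$ let $q_t=\min_{x\in N_t\setminus N_{t-1}} q(x)$. Let $G$ be the map from $\mathbb{F}_p$-subspaces of $A$ to ideals of $A$ given by $G(V)=V+AV$. Then for each $t$ with $1\le t\le e$ and every ideal $J$ of $A$ with $J\subseteq N_t$ and $J\not\subseteq N_{t-1}$, \[ |G^{-1}(J)|\ge p^{\lfloor q_t^2/4\rfloor}. \] Consequently, \[ p^{\lfloor q_t^2/4\rfloor}\bigl(i(N_t)-i(N_{t-1})\bigr)\le s(N_t)-s(N_{t-1}), \] where for a subspace $J$ of $A$, $s(J)$ is the number of $\mathbb{F}_p$-subspaces of $J$ and, for an ideal $J$, $i(J)$ is the number of ideals of $A$ contained in $J$.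
   Context: Algebras are commutative, associative, not necessarily unital. $AV$ denotes the span of products $av$ with $a\in A$, $v\in V$. *)

theory Defs
  imports Main "HOL.Vector_Spaces" "HOL-Computational_Algebra.Primes"
begin

text \<open>A commutative, associative, not necessarily unital algebra over a field:
  the carrier is the whole type 'a (class comm_ring: commutative, associative,
  distributive, no unit required), with a scalar multiplication s making it a
  vector space, compatible with the product.\<close>

definition is_algebra :: "('k::field \<Rightarrow> 'a::comm_ring \<Rightarrow> 'a) \<Rightarrow> bool" where
  "is_algebra s \<longleftrightarrow> vector_space s \<and> (\<forall>c x y. s c (x * y) = s c x * y)"

definition fin_dim_alg :: "('k::field \<Rightarrow> 'a::comm_ring \<Rightarrow> 'a) \<Rightarrow> bool" where
  "fin_dim_alg s \<longleftrightarrow> (\<exists>B. finite B \<and> module.span s B = UNIV)"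

text \<open>A^k (k \<ge> 1): the span of all products of k elements of A.\<close>
definition alg_pow :: "('k::field \<Rightarrow> 'a::comm_ring \<Rightarrow> 'a) \<Rightarrow> nat \<Rightarrow> 'a set" where
  "alg_pow s k = module.span s {foldr (*) xs a | xs a. length xs + 1 = k}"

definition annN :: "nat \<Rightarrow> 'a::comm_ring set" where
  "annN k = {a. \<forall>xs. length xs = k \<longrightarrow> foldr (*) xs a = 0}"

definition qdim :: "('k::field \<Rightarrow> 'a::comm_ring \<Rightarrow> 'a) \<Rightarrow> 'a \<Rightarrow> nat" where
  "qdim s x = vector_space.dim s {s c x + a * x | c a. True}"

definition qmin :: "('k::field \<Rightarrow> 'a::comm_ring \<Rightarrow> 'a) \<Rightarrow> nat \<Rightarrow> nat" where
  "qmin s t = Min (qdim s ` (annN t - annN (t - 1)))"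

definition AV :: "('k::field \<Rightarrow> 'a::comm_ring \<Rightarrow> 'a) \<Rightarrow> 'a set \<Rightarrow> 'a set" where
  "AV s V = module.span s {a * v | a v. v \<in> V}"

definition Gmap :: "('k::field \<Rightarrow> 'a::comm_ring \<Rightarrow> 'a) \<Rightarrow> 'a set \<Rightarrow> 'a set" where
  "Gmap s V = {v + w | v w. v \<in> V \<and> w \<in> AV s V}"

definition is_ideal :: "('k::field \<Rightarrow> 'a::comm_ring \<Rightarrow> 'a) \<Rightarrow> 'a set \<Rightarrow> bool" where
  "is_ideal s J \<longleftrightarrow> module.subspace s J \<and> (\<forall>a j. j \<in> J \<longrightarrow> a * j \<in> J)"

definition num_subspaces :: "('k::field \<Rightarrow> 'a::comm_ring \<Rightarrow> 'a) \<Rightarrow> 'a set \<Rightarrow> nat" where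
  "num_subspaces s J = card {V. module.subspace s V \<and> V \<subseteq> J}"

definition num_ideals :: "('k::field \<Rightarrow> 'a::comm_ring \<Rightarrow> 'a) \<Rightarrow> 'a set \<Rightarrow> nat" where
  "num_ideals s J = card {I. is_ideal s I \<and> I \<subseteq> J}"

end

theory Submission
  imports Defs "HOL-Library.Set_Algebras" "HOL-Library.FuncSet"
begin

text \<open>If \<open>x \<in> J\<close> but \<open>x \<notin> N(t-1)\<close>, then \<open>q(t) \<le> q(x) \<le> min (dim J) (dim AJ + 1)\<close>,
  because \<open>Fx + Ax \<subseteq> J\<close> and \<open>Ax \<subseteq> AJ\<close>. Hence a basis of \<open>J\<close> extending a basis of \<open>AJ\<close>
  splits as \<open>D \<union> W\<close> with \<open>W \<subseteq> AJ\<close> and \<open>|D| |W| \<ge> q(x)\<^sup>2 div 4\<close>. Every matrix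
  \<open>M : D \<times> W \<rightarrow> F\<close> yields the subspace \<open>V(M)\<close> spanned by the vectors \<open>c + (\<Sum>w\<in>W. M c w *s w)\<close>
  for \<open>c \<in> D\<close>. Since \<open>V(M) + AJ = J\<close> and \<open>A\<close> is nilpotent, Nakayama's lemma gives
  \<open>G(V(M)) = J\<close>, and distinct matrices give distinct subspaces; so \<open>|G\<^sup>-\<^sup>1(J)| \<ge> p ^ (|D| |W|)\<close>.
  The subspaces in the fibre over such a \<open>J\<close> lie in \<open>N(t)\<close> but not in \<open>N(t-1)\<close>, so summing over
  these ideals gives the counting inequality.\<close>

lemma foldr_times_left_commute: "foldr (*) xs (b * a) = b * foldr (*) xs (a::'a::comm_ring)"
  by (induction xs) (auto simp: mult.left_commute)

lemma foldr_times_add: "foldr (*) xs (a + b) = foldr (*) xs a + foldr (*) xs (b::'a::comm_ring)"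
  by (induction xs) (auto simp: distrib_left)

lemma foldr_times_zero: "foldr (*) xs 0 = (0::'a::comm_ring)"
  by (induction xs) auto

lemma annN_0: "annN 0 = {0}"
  by (auto simp: annN_def)

lemma annN_mono: "k \<le> l \<Longrightarrow> annN k \<subseteq> annN l"
proof (induction l rule: dec_induct)
  case (step l)
  have "annN l \<subseteq> annN (Suc l)"
    by (auto simp: annN_def length_Suc_conv)
  with step.IH show ?case by blast
qed simp

context vector_space
begin

lemma subspace_set_plus:
  assumes "subspace X" "subspace Y" shows "subspace (X + Y)"
proof -
  have "X + Y = {x + y | x y. x \<in> X \<and> y \<in> Y}"
    by (auto simp: set_plus_def)
  then show ?thesis
    using subspace_sums[OF assms] by simp
qed

lemma set_plus_subspace_subset: "subspace X \<Longrightarrow> X + X \<subseteq> X"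
  by (auto simp: set_plus_def subspace_add)

end

locale comm_algebra = vector_space scale for scale :: "'k::field \<Rightarrow> 'a::comm_ring \<Rightarrow> 'a" (infixr \<open>*s\<close> 75) +
  assumes scale_mult_left: "c *s (x * y) = (c *s x) * y"
begin

lemma scale_mult_right: "c *s (x * y) = x * (c *s y)"
  by (metis scale_mult_left mult.commute)

lemma foldr_times_scale: "foldr (*) xs (c *s a) = c *s foldr (*) xs a"
  by (induction xs) (auto simp: scale_mult_right)

lemma is_ideal_annN: "is_ideal scale (annN k)"
  unfolding is_ideal_def subspace_def annN_def
  by (auto simp: foldr_times_add foldr_times_scale foldr_times_zero foldr_times_left_commute)

lemma is_idealI: "subspace J \<Longrightarrow> (\<And>a j. j \<in> J \<Longrightarrow> a * j \<in> J) \<Longrightarrow> is_ideal scale J"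
  by (simp add: is_ideal_def)

lemma is_ideal_subspace: "is_ideal scale J \<Longrightarrow> subspace J"
  by (simp add: is_ideal_def)

lemma is_ideal_mult: "is_ideal scale J \<Longrightarrow> j \<in> J \<Longrightarrow> a * j \<in> J"
  by (simp add: is_ideal_def)

lemma subspace_AV: "subspace (AV scale V)"
  by (simp add: AV_def)

lemma mult_in_AV: "v \<in> V \<Longrightarrow> a * v \<in> AV scale V"
  unfolding AV_def by (rule span_base) blast

lemma AV_mono: "V \<subseteq> W \<Longrightarrow> AV scale V \<subseteq> AV scale W"
  unfolding AV_def by (rule span_mono) blast

lemma AV_subset_subspace:
  "subspace X \<Longrightarrow> (\<And>a v. v \<in> V \<Longrightarrow> a * v \<in> X) \<Longrightarrow> AV scale V \<subseteq> X"
  unfolding AV_def by (rule span_minimal) auto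

lemma AV_subset_ideal: "is_ideal scale J \<Longrightarrow> V \<subseteq> J \<Longrightarrow> AV scale V \<subseteq> J"
  by (rule AV_subset_subspace) (auto simp: is_ideal_def)

lemma is_ideal_AV: "is_ideal scale (AV scale V)"
proof (rule is_idealI[OF subspace_AV])
  fix a y assume "y \<in> AV scale V"
  moreover have "subspace {y. a * y \<in> AV scale V}"
    using subspace_AV[of V] by (auto simp: subspace_def distrib_left scale_mult_right[symmetric])
  moreover have "AV scale V \<subseteq> {y. a * y \<in> AV scale V}"
    by (rule AV_subset_subspace[OF \<open>subspace {y. a * y \<in> AV scale V}\<close>])
       (auto simp: mult.assoc[symmetric] intro: mult_in_AV)
  ultimately show "a * y \<in> AV scale V" by blast
qed

lemma AV_set_plus: "AV scale (X + Y) \<subseteq> AV scale X + AV scale Y"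
proof (rule AV_subset_subspace[OF subspace_set_plus[OF subspace_AV subspace_AV]])
  fix a v assume "v \<in> X + Y"
  then obtain x y where "v = x + y" "x \<in> X" "y \<in> Y" by (auto elim: set_plus_elim)
  then show "a * v \<in> AV scale X + AV scale Y"
    by (simp add: distrib_left set_plus_intro mult_in_AV)
qed

lemma AV_annN_Suc: "AV scale (annN (Suc k)) \<subseteq> annN k"
proof (rule AV_subset_subspace[OF is_ideal_subspace[OF is_ideal_annN]])
  fix a v assume "v \<in> annN (Suc k)"
  then have "foldr (*) (xs @ [a]) v = 0" if "length xs = k" for xs
    using that by (simp add: annN_def del: foldr_append)
  then show "a * v \<in> annN k" by (simp add: annN_def)
qed

lemma funpow_AV_annN: "X \<subseteq> annN (k + l) \<Longrightarrow> (AV scale ^^ k) X \<subseteq> annN l"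
proof (induction k arbitrary: l)
  case (Suc k)
  then have "(AV scale ^^ k) X \<subseteq> annN (Suc l)" by simp
  from order_trans[OF AV_mono[OF this] AV_annN_Suc] show ?case by simp
qed simp

lemma Gmap_eq_set_plus: "Gmap scale V = V + AV scale V"
  by (auto simp: Gmap_def set_plus_def)

lemma subset_Gmap: "V \<subseteq> Gmap scale V"
  using set_zero_plus2[OF subspace_0[OF subspace_AV], of V] by (simp add: Gmap_eq_set_plus add.commute)

lemma Gmap_subset_ideal:
  assumes "is_ideal scale J" "V \<subseteq> J" shows "Gmap scale V \<subseteq> J"
  unfolding Gmap_eq_set_plus
  using set_plus_mono2[OF assms(2) AV_subset_ideal[OF assms]]
    set_plus_subspace_subset[OF is_ideal_subspace[OF assms(1)]] by (rule order_trans)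

lemma is_ideal_Gmap:
  assumes "subspace V" shows "is_ideal scale (Gmap scale V)"
proof (rule is_idealI)
  show "subspace (Gmap scale V)"
    unfolding Gmap_eq_set_plus by (intro subspace_set_plus assms subspace_AV)
  fix a j assume "j \<in> Gmap scale V"
  then obtain v w where "j = v + w" "v \<in> V" "w \<in> AV scale V"
    by (auto simp: Gmap_eq_set_plus elim: set_plus_elim)
  then have "a * j \<in> AV scale V"
    by (simp add: distrib_left subspace_add[OF subspace_AV] mult_in_AV is_ideal_mult[OF is_ideal_AV])
  from set_plus_intro[OF subspace_0[OF assms] this] show "a * j \<in> Gmap scale V"
    by (simp add: Gmap_eq_set_plus)
qed

text \<open>Nakayama's lemma; \<open>annN e = UNIV\<close> says \<open>A\<^bsup>e+1\<^esup> = 0\<close>. The proof shows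
  \<open>J \<subseteq> G(V) + A\<^sup>kJ\<close> for all \<open>k\<close>.\<close>
lemma Gmap_eq_if_cover:
  assumes nil: "annN e = (UNIV :: 'a set)"
    and J: "is_ideal scale J" and V: "subspace V" "V \<subseteq> J" and cover: "J \<subseteq> V + AV scale J"
  shows "Gmap scale V = J"
proof
  show "Gmap scale V \<subseteq> J" by (rule Gmap_subset_ideal[OF J V(2)])
  define T where "T = Gmap scale V"
  have T: "is_ideal scale T" unfolding T_def by (rule is_ideal_Gmap[OF V(1)])
  have TT: "T + T \<subseteq> T" by (rule set_plus_subspace_subset[OF is_ideal_subspace[OF T]])
  have step: "(AV scale ^^ k) J \<subseteq> T + (AV scale ^^ Suc k) J" for k
  proof (induction k)
    case 0
    have "V \<subseteq> T" unfolding T_def by (rule subset_Gmap)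
    have "J \<subseteq> T + AV scale J"
      using order_trans[OF cover set_plus_mono2[OF \<open>V \<subseteq> T\<close> order_refl]] .
    then show ?case by simp
  next
    case (Suc k)
    have "(AV scale ^^ Suc k) J \<subseteq> AV scale (T + (AV scale ^^ Suc k) J)"
      using Suc.IH AV_mono by simp
    also have "\<dots> \<subseteq> AV scale T + (AV scale ^^ Suc (Suc k)) J"
      using AV_set_plus by simp
    also have "\<dots> \<subseteq> T + (AV scale ^^ Suc (Suc k)) J"
      using set_plus_mono2[OF AV_subset_ideal[OF T subset_refl] order_refl] .
    finally show ?case .
  qed
  have cover_k: "J \<subseteq> T + (AV scale ^^ k) J" for k
  proof (induction k)
    case (Suc k)
    also have "T + (AV scale ^^ k) J \<subseteq> T + (T + (AV scale ^^ Suc k) J)"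
      using set_plus_mono2[OF order_refl step] .
    also have "\<dots> \<subseteq> T + (AV scale ^^ Suc k) J"
      using TT by (simp add: add.assoc[symmetric] set_plus_mono2)
    finally show ?case .
  qed (simp add: set_zero_plus2 subspace_0 is_ideal_subspace[OF T])
  have "(AV scale ^^ e) J \<subseteq> {0}"
    using funpow_AV_annN[of J e 0] by (simp add: nil annN_0)
  then have "T + (AV scale ^^ e) J \<subseteq> T + {0}"
    by (rule set_plus_mono2[OF order_refl])
  with cover_k[of e] show "J \<subseteq> T" by simp
qed

end

context vector_space
begin

lemma in_span_imageE:
  assumes "y \<in> span (f ` D)" "finite D"
  obtains u where "y = (\<Sum>c\<in>D. u c *s f c)"
proof -
  define R where "R = range (\<lambda>u. \<Sum>c\<in>D. u c *s f c)"
  have "subspace R"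
    unfolding subspace_def R_def
  proof (intro conjI ballI allI)
    show "0 \<in> range (\<lambda>u. \<Sum>c\<in>D. u c *s f c)"
      by (rule range_eqI[where x="\<lambda>_. 0"]) simp
    fix x y assume "x \<in> range (\<lambda>u. \<Sum>c\<in>D. u c *s f c)" "y \<in> range (\<lambda>u. \<Sum>c\<in>D. u c *s f c)"
    then obtain u u' where "x = (\<Sum>c\<in>D. u c *s f c)" "y = (\<Sum>c\<in>D. u' c *s f c)" by blast
    then show "x + y \<in> range (\<lambda>u. \<Sum>c\<in>D. u c *s f c)"
      by (intro range_eqI[where x="\<lambda>c. u c + u' c"]) (simp add: scale_left_distrib sum.distrib)
  next
    fix a x assume "x \<in> range (\<lambda>u. \<Sum>c\<in>D. u c *s f c)"
    then obtain u where "x = (\<Sum>c\<in>D. u c *s f c)" by blast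
    then show "a *s x \<in> range (\<lambda>u. \<Sum>c\<in>D. u c *s f c)"
      by (intro range_eqI[where x="\<lambda>c. a * u c"]) (simp add: scale_sum_right)
  qed
  moreover have "f c0 \<in> R" if "c0 \<in> D" for c0
  proof -
    have "(\<Sum>c\<in>D. (if c = c0 then 1 else 0) *s f c) = (\<Sum>c\<in>D. if c = c0 then f c else 0)"
      by (rule sum.cong) auto
    also have "\<dots> = f c0" using that assms(2) by simp
    finally show ?thesis unfolding R_def by (rule range_eqI[OF sym, where x="\<lambda>c. if c = c0 then 1 else 0"])
  qed
  ultimately have "span (f ` D) \<subseteq> R" by (intro span_minimal) auto
  with assms(1) have "y \<in> R" by blast
  then show thesis unfolding R_def using that by blast
qed

lemma span_graph_Int_span:
  assumes indep: "independent (D \<union> W)" and disj: "D \<inter> W = {}" and fin: "finite D" "finite W"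
    and g: "\<And>c. c \<in> D \<Longrightarrow> g c \<in> span W"
    and x: "x \<in> span ((\<lambda>c. c + g c) ` D)" "x \<in> span W"
  shows "x = 0"
proof -
  obtain u where u: "x = (\<Sum>c\<in>D. u c *s (c + g c))"
    using in_span_imageE[OF x(1) fin(1)] by blast
  have "(\<Sum>c\<in>D. u c *s g c) \<in> span W"
    using g by (intro span_sum span_scale) auto
  with x(2) have "x - (\<Sum>c\<in>D. u c *s g c) \<in> span W" by (rule span_diff)
  then obtain \<beta> where \<beta>: "x - (\<Sum>c\<in>D. u c *s g c) = (\<Sum>w\<in>W. \<beta> w *s w)"
    using span_finite[OF fin(2)] by blast
  define \<gamma> where "\<gamma> v = (if v \<in> D then u v else - \<beta> v)" for v
  have "(\<Sum>v\<in>D. \<gamma> v *s v) = (\<Sum>c\<in>D. u c *s c)"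
    by (rule sum.cong) (simp_all add: \<gamma>_def)
  moreover have "(\<Sum>v\<in>W. \<gamma> v *s v) = (\<Sum>w\<in>W. - (\<beta> w *s w))"
    using disj by (intro sum.cong) (auto simp: \<gamma>_def)
  ultimately have "(\<Sum>v\<in>D \<union> W. \<gamma> v *s v) = (\<Sum>c\<in>D. u c *s c) - (\<Sum>w\<in>W. \<beta> w *s w)"
    using disj fin by (simp add: sum.union_disjoint sum_negf)
  also have "\<dots> = 0"
    using u \<beta> by (simp add: scale_right_distrib sum.distrib)
  finally have \<gamma>0: "\<gamma> v = 0" if "v \<in> D \<union> W" for v
    using independentD[OF indep _ subset_refl _ that] fin by simp
  have "u c = 0" if "c \<in> D" for c
    using \<gamma>0[of c] that by (simp add: \<gamma>_def)
  then show "x = 0" using u by simp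
qed

lemma inj_on_span_graph:
  assumes indep: "independent (D \<union> W)" and disj: "D \<inter> W = {}" and fin: "finite D" "finite W"
  shows "inj_on (\<lambda>M. span ((\<lambda>c. c + (\<Sum>w\<in>W. M c w *s w)) ` D)) (D \<rightarrow>\<^sub>E W \<rightarrow>\<^sub>E UNIV)"
proof (rule inj_onI)
  fix M M' :: "'b \<Rightarrow> 'b \<Rightarrow> 'a"
  assume M: "M \<in> D \<rightarrow>\<^sub>E W \<rightarrow>\<^sub>E UNIV" and M': "M' \<in> D \<rightarrow>\<^sub>E W \<rightarrow>\<^sub>E UNIV"
  define \<phi> where "\<phi> M = (\<lambda>c. c + (\<Sum>w\<in>W. M c w *s w))" for M :: "'b \<Rightarrow> 'b \<Rightarrow> 'a"
  assume "span ((\<lambda>c. c + (\<Sum>w\<in>W. M c w *s w)) ` D) = span ((\<lambda>c. c + (\<Sum>w\<in>W. M' c w *s w)) ` D)"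
  then have eq: "span (\<phi> M ` D) = span (\<phi> M' ` D)" by (simp add: \<phi>_def)
  have "M c w = M' c w" if c: "c \<in> D" and w: "w \<in> W" for c w
  proof -
    have "\<phi> M c \<in> span (\<phi> M ` D)" using c by (intro span_base imageI)
    then have "\<phi> M c \<in> span (\<phi> M' ` D)" by (simp only: eq)
    moreover have "\<phi> M' c \<in> span (\<phi> M' ` D)" using c by (intro span_base imageI)
    ultimately have "\<phi> M c - \<phi> M' c \<in> span (\<phi> M' ` D)" by (rule span_diff)
    moreover have "\<phi> M c - \<phi> M' c = (\<Sum>w\<in>W. (M c w - M' c w) *s w)"
      by (simp add: \<phi>_def scale_left_diff_distrib sum_subtractf)
    ultimately have "(\<Sum>w\<in>W. (M c w - M' c w) *s w) \<in> span (\<phi> M' ` D)" by simp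
    then have "(\<Sum>w\<in>W. (M c w - M' c w) *s w) = 0"
      unfolding \<phi>_def
      by (rule span_graph_Int_span[OF indep disj fin, rotated]) (intro span_sum span_scale span_base; simp)+
    then show ?thesis
      using independentD[OF independent_mono[OF indep] fin(2) subset_refl _ w,
          of "\<lambda>w. M c w - M' c w"] by simp
  qed
  then have "M c = M' c" if "c \<in> D" for c
    using M M' that by (intro PiE_ext[of "M c" W _ "M' c"]) auto
  with M M' show "M = M'" by (intro PiE_ext) auto
qed

end

lemma sq_div_4_le_halves: "(d::nat)\<^sup>2 div 4 \<le> (d div 2) * (d - d div 2)"
proof -
  obtain k where "d = 2 * k \<or> d = 2 * k + 1" by (metis odd_two_times_div_two_succ dvd_mult_div_cancel)
  then show ?thesis
  proof
    assume "d = 2 * k + 1"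
    moreover have "(2 * k + 1)\<^sup>2 = 4 * (k * k + k) + 1" by (simp add: power2_eq_square algebra_simps)
    ultimately show ?thesis by simp
  qed (simp add: power2_eq_square)
qed

lemma obtain_split_sq_div_4:
  fixes q m r :: nat
  assumes "q \<le> m + r" "q \<le> r + 1"
  obtains n where "n \<le> r" "q\<^sup>2 div 4 \<le> (m + r - n) * n"
proof (cases "m + r - (m + r) div 2 \<le> r")
  case True
  have "q\<^sup>2 div 4 \<le> (m + r)\<^sup>2 div 4" using assms(1) by (intro div_le_mono power_mono) auto
  also have "\<dots> \<le> (m + r - (m + r - (m + r) div 2)) * (m + r - (m + r) div 2)"
    using sq_div_4_le_halves[of "m + r"] by (simp add: mult.commute)
  finally show thesis using True that by blast
next
  case False
  have "q\<^sup>2 div 4 \<le> r * r"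
  proof (cases "r = 0")
    case False
    have "q\<^sup>2 \<le> (2 * r)\<^sup>2" using assms(2) False by (intro power_mono) auto
    then show ?thesis by (simp add: power2_eq_square)
  qed (use assms(2) in \<open>auto simp: power2_eq_square le_Suc_eq\<close>)
  also have "\<dots> \<le> m * r"
    using False by (intro mult_right_mono) presburger+
  finally show thesis using that[of r] by simp
qed

context comm_algebra
begin

lemma annN_eq_UNIV_if_alg_pow_eq_0:
  assumes "alg_pow scale (e + 1) = {0}" shows "annN e = (UNIV :: 'a set)"
proof -
  have "foldr (*) xs a \<in> alg_pow scale (e + 1)" if "length xs = e" for xs a
    unfolding alg_pow_def using that by (intro span_base) auto
  then have "foldr (*) xs a = 0" if "length xs = e" for xs and a :: 'a
    using assms that by blast
  then show ?thesis by (auto simp: annN_def)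
qed

lemma Gmap_span_graph:
  assumes nil: "annN e = (UNIV :: 'a set)" and J: "is_ideal scale J"
    and D: "D \<subseteq> J" and g: "\<And>c. c \<in> D \<Longrightarrow> g c \<in> AV scale J"
    and cover: "J \<subseteq> span D + AV scale J"
  shows "Gmap scale (span ((\<lambda>c. c + g c) ` D)) = J"
proof (rule Gmap_eq_if_cover[OF nil J subspace_span])
  define V where "V = span ((\<lambda>c. c + g c) ` D)"
  have AJ: "AV scale J \<subseteq> J" by (rule AV_subset_ideal[OF J order_refl])
  show "V \<subseteq> J" unfolding V_def
    using D g AJ by (intro span_minimal is_ideal_subspace[OF J])
      (auto intro: subspace_add[OF is_ideal_subspace[OF J]])
  have "subspace V" unfolding V_def by simp
  have "span D \<subseteq> V + AV scale J"
  proof (rule span_minimal[OF _ subspace_set_plus[OF \<open>subspace V\<close> subspace_AV]])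
    show "D \<subseteq> V + AV scale J"
    proof
      fix c assume "c \<in> D"
      then have "c + g c \<in> V" unfolding V_def by (intro span_base imageI)
      moreover have "- g c \<in> AV scale J" using g \<open>c \<in> D\<close> by (intro subspace_neg subspace_AV)
      ultimately show "c \<in> V + AV scale J" using set_plus_intro by fastforce
    qed
  qed
  then have "span D + AV scale J \<subseteq> V + (AV scale J + AV scale J)"
    by (metis add.assoc order_refl set_plus_mono2)
  also have "\<dots> \<subseteq> V + AV scale J"
    by (intro set_plus_mono2 order_refl set_plus_subspace_subset subspace_AV)
  finally show "J \<subseteq> V + AV scale J" using cover by blast
qed

lemma card_Gmap_preimage_ge:
  assumes finite: "finite (UNIV :: 'a set)" and nil: "annN e = (UNIV :: 'a set)"
    and J: "is_ideal scale J" and disj: "D \<inter> W = {}" and indep: "independent (D \<union> W)"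
    and DW: "D \<union> W \<subseteq> J" "W \<subseteq> AV scale J" and cover: "J \<subseteq> span D + AV scale J"
  shows "card (UNIV :: 'k set) ^ (card D * card W) \<le> card {V. subspace V \<and> Gmap scale V = J}"
proof -
  have fin: "finite D" "finite W" using finite by (auto intro: finite_subset)
  define P where "P = D \<rightarrow>\<^sub>E W \<rightarrow>\<^sub>E (UNIV :: 'k set)"
  define VM where "VM M = span ((\<lambda>c. c + (\<Sum>w\<in>W. M c w *s w)) ` D)" for M
  have "VM ` P \<subseteq> {V. subspace V \<and> Gmap scale V = J}"
  proof clarify
    fix M assume "M \<in> P"
    have "(\<Sum>w\<in>W. M c w *s w) \<in> AV scale J" for c
      using DW(2) by (intro subspace_sum[OF subspace_AV] subspace_scale[OF subspace_AV]) auto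
    then show "subspace (VM M) \<and> Gmap scale (VM M) = J"
      unfolding VM_def using DW(1) by (simp add: Gmap_span_graph[OF nil J _ _ cover])
  qed
  then have "card (VM ` P) \<le> card {V. subspace V \<and> Gmap scale V = J}"
    using finite by (intro card_mono) (auto intro: finite_subset[of _ "Pow UNIV"])
  moreover have "card (VM ` P) = card P"
    unfolding VM_def P_def by (rule card_image[OF inj_on_span_graph[OF indep disj fin]])
  moreover have "card P = card (UNIV :: 'k set) ^ (card D * card W)"
    using fin by (simp add: P_def card_PiE mult.commute flip: power_mult)
  ultimately show ?thesis by simp
qed

lemma qdim_le_card_span:
  assumes J: "is_ideal scale J" and x: "x \<in> J" and B: "J \<subseteq> span B" "finite B"
  shows "qdim scale x \<le> card B"
  unfolding qdim_def
proof (rule dim_le_card[OF _ B(2)])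
  have "c *s x + a * x \<in> J" for c a
    using J x by (intro subspace_add subspace_scale is_ideal_subspace is_ideal_mult)
  then show "{c *s x + a * x | c a. True} \<subseteq> span B" using B(1) by blast
qed

lemma qdim_le_card_span_AV:
  assumes x: "x \<in> J" and B: "AV scale J \<subseteq> span B" "finite B"
  shows "qdim scale x \<le> card B + 1"
proof -
  have "a * x \<in> span (insert x B)" for a
    using mult_in_AV[OF x] B(1) span_mono[of B "insert x B"] by blast
  then have "c *s x + a * x \<in> span (insert x B)" for c a
    by (rule span_add[OF span_scale[OF span_base[OF insertI1]]])
  then have "qdim scale x \<le> card (insert x B)"
    unfolding qdim_def using B(2) by (intro dim_le_card) auto
  also have "\<dots> \<le> card B + 1" using B(2) by (simp add: card_insert_if)
  finally show ?thesis .
qed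

lemma obtain_split_basis:
  assumes finite: "finite (UNIV :: 'a set)" and J: "is_ideal scale J" and x: "x \<in> J"
  obtains D W where "D \<inter> W = {}" "independent (D \<union> W)" "D \<union> W \<subseteq> J" "W \<subseteq> AV scale J"
    "J \<subseteq> span D + AV scale J" "(qdim scale x)\<^sup>2 div 4 \<le> card D * card W"
proof -
  obtain BA where BA: "BA \<subseteq> AV scale J" "independent BA" "AV scale J \<subseteq> span BA"
    using maximal_independent_subset by blast
  obtain B where B: "BA \<subseteq> B" "B \<subseteq> J" "independent B" "J \<subseteq> span B"
    using maximal_independent_subset_extend[OF order_trans[OF BA(1) AV_subset_ideal[OF J order_refl]] BA(2)]
    by blast
  have fin: "finite B" "finite BA" using finite by (auto intro: finite_subset)
  have "card B = card (B - BA) + card BA"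
    using fin B(1) by (simp add: card_Diff_subset card_mono)
  moreover have "qdim scale x \<le> card B" by (rule qdim_le_card_span[OF J x B(4) fin(1)])
  moreover have "qdim scale x \<le> card BA + 1" by (rule qdim_le_card_span_AV[OF x BA(3) fin(2)])
  ultimately obtain n where n: "n \<le> card BA" "(qdim scale x)\<^sup>2 div 4 \<le> (card B - n) * n"
    using obtain_split_sq_div_4[of "qdim scale x" "card (B - BA)" "card BA"] by auto
  obtain W where W: "W \<subseteq> BA" "card W = n"
    using obtain_subset_with_card_n[OF n(1)] by blast
  define D where "D = B - W"
  have DW: "D \<inter> W = {}" "D \<union> W = B" unfolding D_def using W(1) B(1) by auto
  have "card D = card B - n"
    unfolding D_def using W B(1) fin by (simp add: card_Diff_subset finite_subset)
  moreover have "J \<subseteq> span D + AV scale J"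
  proof -
    have "span W \<subseteq> AV scale J"
      using W(1) BA(1) by (intro span_minimal subspace_AV) auto
    then have "span (D \<union> W) \<subseteq> span D + AV scale J"
      unfolding span_Un by (auto simp: set_plus_def)
    with B(4) DW(2) show ?thesis by simp
  qed
  ultimately show thesis
    using that[OF DW(1)] DW(2) B(2,3) W BA(1) n(2) by auto
qed

lemma card_Gmap_preimage_ge_qdim:
  assumes finite_k: "finite (UNIV :: 'k set)" and finite: "finite (UNIV :: 'a set)"
    and nil: "annN e = (UNIV :: 'a set)" and J: "is_ideal scale J" and x: "x \<in> J"
  shows "card (UNIV :: 'k set) ^ ((qdim scale x)\<^sup>2 div 4) \<le> card {V. subspace V \<and> Gmap scale V = J}"
proof -
  obtain D W where DW: "D \<inter> W = {}" "independent (D \<union> W)" "D \<union> W \<subseteq> J" "W \<subseteq> AV scale J"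
    "J \<subseteq> span D + AV scale J" and q: "(qdim scale x)\<^sup>2 div 4 \<le> card D * card W"
    using obtain_split_basis[OF finite J x] by blast
  have "card (UNIV :: 'k set) ^ ((qdim scale x)\<^sup>2 div 4) \<le> card (UNIV :: 'k set) ^ (card D * card W)"
    using finite_k by (intro power_increasing[OF q]) (simp add: Suc_le_eq card_gt_0_iff)
  also have "\<dots> \<le> card {V. subspace V \<and> Gmap scale V = J}"
    by (rule card_Gmap_preimage_ge[OF finite nil J DW])
  finally show ?thesis .
qed

lemma card_Gmap_preimage_ge_qmin:
  assumes finite_k: "finite (UNIV :: 'k set)" and finite: "finite (UNIV :: 'a set)"
    and nil: "annN e = (UNIV :: 'a set)"
    and J: "is_ideal scale J" "J \<subseteq> annN t" "\<not> J \<subseteq> annN (t - 1)"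
  shows "card (UNIV :: 'k set) ^ ((qmin scale t)\<^sup>2 div 4) \<le> card {V. subspace V \<and> Gmap scale V = J}"
proof -
  obtain x where x: "x \<in> J" "x \<notin> annN (t - 1)" using J(3) by blast
  then have "qmin scale t \<le> qdim scale x"
    unfolding qmin_def using J(2) finite_subset[OF subset_UNIV finite] by (intro Min_le) auto
  then have "card (UNIV :: 'k set) ^ ((qmin scale t)\<^sup>2 div 4) \<le> card (UNIV :: 'k set) ^ ((qdim scale x)\<^sup>2 div 4)"
    using finite_k by (intro power_increasing div_le_mono power_mono) (simp_all add: Suc_le_eq card_gt_0_iff)
  also have "\<dots> \<le> card {V. subspace V \<and> Gmap scale V = J}"
    by (rule card_Gmap_preimage_ge_qdim[OF finite_k finite nil J(1) x(1)])
  finally show ?thesis .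
qed

lemma card_le_card_fibres:
  assumes "finite S" and fibre: "\<And>y. y \<in> Y \<Longrightarrow> c \<le> card {x \<in> S. f x = y}"
  shows "card Y * c \<le> card S"
proof (cases "finite Y")
  case True
  have "card Y * c \<le> (\<Sum>y\<in>Y. card {x \<in> S. f x = y})"
    using fibre sum_mono[of Y "\<lambda>_. c"] by (simp add: mult.commute)
  also have "\<dots> = card (\<Union>y\<in>Y. {x \<in> S. f x = y})"
    using assms(1) by (intro card_UN_disjoint[symmetric, OF True]) auto
  also have "\<dots> \<le> card S"
    using assms(1) by (intro card_mono) auto
  finally show ?thesis .
qed simp

lemma num_ideals_layer_le_num_subspaces_layer:
  assumes finite: "finite (UNIV :: 'a set)" and N': "is_ideal scale N'" "N' \<subseteq> N"
    and fibre: "\<And>J. is_ideal scale J \<Longrightarrow> J \<subseteq> N \<Longrightarrow> \<not> J \<subseteq> N' \<Longrightarrow>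
      c \<le> card {V. subspace V \<and> Gmap scale V = J}"
  shows "int c * (int (num_ideals scale N) - int (num_ideals scale N'))
    \<le> int (num_subspaces scale N) - int (num_subspaces scale N')"
proof -
  define Sub where "Sub X = {V. subspace V \<and> V \<subseteq> X}" for X
  define Id where "Id X = {I. is_ideal scale I \<and> I \<subseteq> X}" for X
  have fin: "finite (Z :: 'a set set)" for Z
    using finite by (auto intro: finite_subset[of _ "Pow UNIV"])
  have sub: "Sub N' \<subseteq> Sub N" "Id N' \<subseteq> Id N" using N'(2) by (auto simp: Sub_def Id_def)
  have "card (Id N - Id N') * c \<le> card (Sub N - Sub N')"
  proof (rule card_le_card_fibres[OF fin, where f = "Gmap scale"])
    fix J assume J: "J \<in> Id N - Id N'"
    then have "J \<subseteq> N" "\<not> J \<subseteq> N'" by (auto simp: Id_def)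
    have "V \<in> Sub N - Sub N'" if V: "subspace V" "Gmap scale V = J" for V
    proof -
      have "V \<subseteq> J" using subset_Gmap[of V] V(2) by simp
      moreover have "\<not> V \<subseteq> N'"
        using Gmap_subset_ideal[OF N'(1), of V] V(2) \<open>\<not> J \<subseteq> N'\<close> by blast
      ultimately show ?thesis using V(1) \<open>J \<subseteq> N\<close> by (auto simp: Sub_def)
    qed
    then have "{V. subspace V \<and> Gmap scale V = J} \<subseteq> {V \<in> Sub N - Sub N'. Gmap scale V = J}"
      by blast
    moreover have "c \<le> card {V. subspace V \<and> Gmap scale V = J}"
      using J by (intro fibre) (auto simp: Id_def)
    ultimately show "c \<le> card {V \<in> Sub N - Sub N'. Gmap scale V = J}"
      using fin by (meson card_mono order_trans)
  qed
  moreover have diff: "int (card (X - X')) = int (card X) - int (card X')" if "X' \<subseteq> X" for X X' :: "'a set set"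
    using that fin card_mono[OF fin that] by (simp add: card_Diff_subset of_nat_diff)
  ultimately have "int c * (int (card (Id N)) - int (card (Id N'))) \<le> int (card (Sub N)) - int (card (Sub N'))"
    unfolding diff[OF sub(1), symmetric] diff[OF sub(2), symmetric]
    by (simp only: of_nat_mult[symmetric] of_nat_le_iff) (simp add: mult.commute)
  then show ?thesis by (simp add: num_ideals_def num_subspaces_def Sub_def Id_def)
qed

end

lemma (in vector_space) finite_UNIV_if_finite_span:
  assumes finite_scalars: "finite (UNIV :: 'a set)" and B: "finite B" "span B = UNIV"
  shows "finite (UNIV :: 'b set)"
proof -
  have "UNIV = (\<lambda>u. \<Sum>v\<in>B. u v *s v) ` (B \<rightarrow>\<^sub>E UNIV)"
  proof (intro subset_antisym subsetI)
    fix y :: 'b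
    obtain u where "y = (\<Sum>v\<in>B. u v *s v)" using B span_finite[OF B(1)] by blast
    also have "\<dots> = (\<Sum>v\<in>B. restrict u B v *s v)" by simp
    finally show "y \<in> (\<lambda>u. \<Sum>v\<in>B. u v *s v) ` (B \<rightarrow>\<^sub>E UNIV)" by (rule image_eqI[where x = "restrict u B"]) simp_all
  qed simp
  also have "finite \<dots>" using B(1) finite_scalars by (intro finite_imageI finite_PiE) auto
  finally show ?thesis .
qed

lemma comm_algebra_if_is_algebra: "is_algebra s \<Longrightarrow> comm_algebra s"
  by (simp add: is_algebra_def comm_algebra_def comm_algebra_axioms_def)

theorem proposition2p4:
  fixes s :: "'k::{field,finite} \<Rightarrow> 'a::comm_ring \<Rightarrow> 'a"
    and p e t :: nat
  assumes p: "prime p" and card_k: "card (UNIV :: 'k set) = p"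
    and alg: "is_algebra s"
    and fd: "fin_dim_alg s"
    and e1: "e \<ge> 1"
    and Ae: "alg_pow s e \<noteq> {0}"
    and Ae1: "alg_pow s (e + 1) = {0}"
    and t: "1 \<le> t" "t \<le> e"
  shows "(\<forall>J. is_ideal s J \<and> J \<subseteq> annN t \<and> \<not> J \<subseteq> annN (t - 1) \<longrightarrow>
            card {V. module.subspace s V \<and> Gmap s V = J} \<ge> p ^ ((qmin s t)\<^sup>2 div 4))
       \<and> int p ^ ((qmin s t)\<^sup>2 div 4)
           * (int (num_ideals s (annN t)) - int (num_ideals s (annN (t - 1))))
         \<le> int (num_subspaces s (annN t)) - int (num_subspaces s (annN (t - 1)))"
proof -
  interpret comm_algebra s by (rule comm_algebra_if_is_algebra[OF alg])
  obtain B where "finite B" "span B = UNIV" using fd by (auto simp: fin_dim_alg_def)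
  then have finite: "finite (UNIV :: 'a set)" by (rule finite_UNIV_if_finite_span[OF finite])
  have nil: "annN e = (UNIV :: 'a set)" by (rule annN_eq_UNIV_if_alg_pow_eq_0[OF Ae1])
  have fibre: "p ^ ((qmin s t)\<^sup>2 div 4) \<le> card {V. subspace V \<and> Gmap s V = J}"
    if "is_ideal s J" "J \<subseteq> annN t" "\<not> J \<subseteq> annN (t - 1)" for J
    using card_Gmap_preimage_ge_qmin[OF _ finite nil that] card_k by simp
  have "annN (t - 1) \<subseteq> (annN t :: 'a set)" by (rule annN_mono) simp
  from num_ideals_layer_le_num_subspaces_layer[OF finite is_ideal_annN this fibre]
  show ?thesis using fibre by auto
qed

end
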